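(* Let $G$ be a red-blue colouring of $K_n$, let $u \in V(G)$, and let $A_1, \ldots, A_5$ be pairwise disjoint non-empty subsets of $V(G) \setminus \{u\}$ such that $(A_1, \ldots, A_5)$ is a pentagon blow-up in $G$. Suppose that $(A_1, \ldots, A_5)$ has no bad configuration with respect to $u$. Then $(A_i \cup \{u\}, A_{i+1}, \ldots, A_{i+4})$ is a pentagon blow-up in $G$ for some $i \in [5]$ (indices modulo 5).
   Context: A red-blue colouring of $K_n$ assigns red or blue to each edge of the complete graph on the $n$-vertex set $V(G)$. For pairwise disjoint non-empty sets $A_1,\dots,A_5 \subseteq V(G)$, $(A_1,\dots,A_5)$ is a pentagon blow-up if for every $i \in [5]$ all edges between $A_i$ and $A_{i+1}$ are red and all edges between $A_i$ and $A_{i+2}$ are blue (indices modulo 5). For $u \notin A_1\cup\dots\cup A_5$, a bad configuration in $(A_1,\dots,A_5)$ with respect to $u$ is either a set of three red neighbours of $u$, one from each of $A_i, A_{i+2}, A_{i+3}$ for some $i \in [5]$, or a set of three blue neighbours of $u$, one from each of $A_i, A_{i+1}, A_{i+2}$ for some $i \in [5]$. *)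

theory Defs
  imports Main
begin

datatype colour = Red | Blue

definition red_blue_colouring :: "'a set \<Rightarrow> ('a \<Rightarrow> 'a \<Rightarrow> colour) \<Rightarrow> bool" where
  "red_blue_colouring V c \<longleftrightarrow> finite V \<and> (\<forall>x\<in>V. \<forall>y\<in>V. c x y = c y x)"

text \<open>Parts are indexed by 0..4 (standing for 1..5), indices taken modulo 5.\<close>
definition pentagon_blowup :: "('a \<Rightarrow> 'a \<Rightarrow> colour) \<Rightarrow> (nat \<Rightarrow> 'a set) \<Rightarrow> bool" where
  "pentagon_blowup c A \<longleftrightarrow>
     (\<forall>i<5. A i \<noteq> {}) \<and>
     (\<forall>i<5. \<forall>j<5. i \<noteq> j \<longrightarrow> A i \<inter> A j = {}) \<and>
     (\<forall>i<5. \<forall>x\<in>A i. \<forall>y\<in>A ((i + 1) mod 5). c x y = Red) \<and>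
     (\<forall>i<5. \<forall>x\<in>A i. \<forall>y\<in>A ((i + 2) mod 5). c x y = Blue)"

definition has_bad_configuration :: "('a \<Rightarrow> 'a \<Rightarrow> colour) \<Rightarrow> (nat \<Rightarrow> 'a set) \<Rightarrow> 'a \<Rightarrow> bool" where
  "has_bad_configuration c A u \<longleftrightarrow>
     (\<exists>i<5. \<exists>x\<in>A i. \<exists>y\<in>A ((i + 2) mod 5). \<exists>z\<in>A ((i + 3) mod 5).
        c u x = Red \<and> c u y = Red \<and> c u z = Red) \<or>
     (\<exists>i<5. \<exists>x\<in>A i. \<exists>y\<in>A ((i + 1) mod 5). \<exists>z\<in>A ((i + 2) mod 5).
        c u x = Blue \<and> c u y = Blue \<and> c u z = Blue)"

end

theory Submission
  imports Defs "HOL-Number_Theory.Cong"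
begin

text \<open>Record, for each part \<open>A j\<close>, whether \<open>u\<close> has a red and whether it has a blue neighbour
  there. Every part yields at least one of the two, and the absence of bad configurations forbids
  three red parts at positions \<open>i, i + 2, i + 3\<close> and three blue parts at consecutive positions.
  A check of the resulting \<open>2\<^sup>1\<^sup>0\<close> patterns shows that some position \<open>i\<close> has
  all-red parts at \<open>i \<plusminus> 1\<close> and all-blue parts at \<open>i \<plusminus> 2\<close> as seen from \<open>u\<close>; exactly then
  \<open>u\<close> can join \<open>A i\<close>, whatever its colours towards \<open>A i\<close> itself.\<close>

lemma all_less_5: "(\<forall>j<5. P j) \<longleftrightarrow> P 0 \<and> P 1 \<and> P 2 \<and> P 3 \<and> P (4::nat)"
  by (auto simp: less_Suc_eq numeral_eq_Suc)

lemma ex_less_5: "(\<exists>j<5. P j) \<longleftrightarrow> P 0 \<or> P 1 \<or> P 2 \<or> P 3 \<or> P (4::nat)"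
  by (auto simp: less_Suc_eq numeral_eq_Suc)

lemma add_mod_eq_iff:
  fixes i j k n :: nat
  assumes "i < n" "j < n" "k \<le> n"
  shows "(j + k) mod n = i \<longleftrightarrow> j = (i + (n - k)) mod n"
proof -
  have "(j + k) mod n = i \<longleftrightarrow> [j + k = i + (n - k) + k] (mod n)"
    using assms by (simp add: cong_def)
  also have "\<dots> \<longleftrightarrow> [j = i + (n - k)] (mod n)"
    by (rule cong_add_rcancel_nat)
  finally show ?thesis
    using assms by (simp add: cong_def)
qed

lemma add_mod_neq_self:
  fixes i d n :: nat
  assumes "i < n" "0 < d" "d < n"
  shows "(i + d) mod n \<noteq> i"
proof
  assume "(i + d) mod n = i"
  then have "[i + d = i + 0] (mod n)"
    using assms(1) by (simp add: cong_def)
  then have "[d = 0] (mod n)"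
    by (simp only: cong_add_lcancel_nat)
  then show False
    using assms(2,3) by (simp add: cong_def)
qed

lemma pentagon_pattern:
  fixes r b :: "nat \<Rightarrow> bool"
  assumes "\<forall>j<5. r j \<or> b j"
    and "\<forall>i<5. \<not> (r i \<and> r ((i + 2) mod 5) \<and> r ((i + 3) mod 5))"
    and "\<forall>i<5. \<not> (b i \<and> b ((i + 1) mod 5) \<and> b ((i + 2) mod 5))"
  shows "\<exists>i<5. \<not> b ((i + 1) mod 5) \<and> \<not> r ((i + 2) mod 5) \<and> \<not> r ((i + 3) mod 5)
    \<and> \<not> b ((i + 4) mod 5)"
  using assms unfolding all_less_5 ex_less_5
  \<comment> \<open>simp evaluates some indices modulo 5 to \<open>Suc (Suc 0)\<close>, others to \<open>2\<close>;
    \<open>numeral_2_eq_2\<close> makes the propositional atoms match for \<open>argo\<close>\<close>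
  by (simp add: numeral_2_eq_2) argo

lemma edges_at_distance_insert:
  fixes i d n :: nat
  assumes "i < n" "0 < d" "d < n"
    and old: "\<forall>j<n. \<forall>x\<in>A j. \<forall>y\<in>A ((j + d) mod n). c x y = k"
    and forward: "\<forall>y\<in>A ((i + d) mod n). c u y = k"
    and backward: "\<forall>x\<in>A ((i + (n - d)) mod n). c x u = k"
  shows "\<forall>j<n. \<forall>x\<in>(A(i := A i \<union> {u})) j. \<forall>y\<in>(A(i := A i \<union> {u})) ((j + d) mod n). c x y = k"
proof (intro allI impI ballI)
  fix j x y
  assume j: "j < n" and x: "x \<in> (A(i := A i \<union> {u})) j"
    and y: "y \<in> (A(i := A i \<union> {u})) ((j + d) mod n)"
  have shift: "(i + d) mod n \<noteq> i"
    using add_mod_neq_self assms(1-3) .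
  consider "x \<in> A j" "y \<in> A ((j + d) mod n)" | "x = u" "j = i" | "y = u" "(j + d) mod n = i"
    using x y by (auto split: if_splits)
  then show "c x y = k"
  proof cases
    case 1
    then show ?thesis using old j by blast
  next
    case 2
    then show ?thesis using y shift forward by auto
  next
    case 3
    have "j = (i + (n - d)) mod n"
      using add_mod_eq_iff[of i n j d] assms(1) less_imp_le[OF assms(3)] j 3(2) by blast
    moreover have "x \<in> A j"
      using x 3(2) shift by (cases "j = i") auto
    ultimately show ?thesis
      using 3(1) backward by blast
  qed
qed

lemma pentagon_blowup_insert:
  assumes blowup: "pentagon_blowup c A" and i: "i < 5"
    and fresh: "\<forall>j<5. u \<notin> A j"
    and sym: "\<forall>j<5. \<forall>x\<in>A j. c x u = c u x"
    and red: "\<forall>y\<in>A ((i + 1) mod 5). c u y = Red" "\<forall>y\<in>A ((i + 4) mod 5). c u y = Red"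
    and blue: "\<forall>y\<in>A ((i + 2) mod 5). c u y = Blue" "\<forall>y\<in>A ((i + 3) mod 5). c u y = Blue"
  shows "pentagon_blowup c (A(i := A i \<union> {u}))"
proof -
  have backward: "\<forall>x\<in>A ((i + 4) mod 5). c x u = Red" "\<forall>x\<in>A ((i + 3) mod 5). c x u = Blue"
    using sym red(2) blue(2) by (metis mod_less_divisor zero_less_numeral)+
  have "\<forall>j<5. \<forall>x\<in>(A(i := A i \<union> {u})) j. \<forall>y\<in>(A(i := A i \<union> {u})) ((j + 1) mod 5). c x y = Red"
    by (rule edges_at_distance_insert) (use blowup i red blue backward in \<open>auto simp: pentagon_blowup_def\<close>)
  moreover have "\<forall>j<5. \<forall>x\<in>(A(i := A i \<union> {u})) j. \<forall>y\<in>(A(i := A i \<union> {u})) ((j + 2) mod 5). c x y = Blue"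
    by (rule edges_at_distance_insert) (use blowup i red blue backward in \<open>auto simp: pentagon_blowup_def\<close>)
  ultimately show ?thesis
    using blowup fresh i by (auto simp: pentagon_blowup_def)
qed

definition has_neighbour :: "('a \<Rightarrow> 'a \<Rightarrow> colour) \<Rightarrow> colour \<Rightarrow> 'a \<Rightarrow> 'a set \<Rightarrow> bool" where
  "has_neighbour c k u X \<longleftrightarrow> (\<exists>x\<in>X. c u x = k)"

lemma not_has_neighbour_Red:
  "\<not> has_neighbour c Red u X \<Longrightarrow> \<forall>x\<in>X. c u x = Blue"
  unfolding has_neighbour_def by (metis colour.exhaust)

lemma not_has_neighbour_Blue:
  "\<not> has_neighbour c Blue u X \<Longrightarrow> \<forall>x\<in>X. c u x = Red"
  unfolding has_neighbour_def by (metis colour.exhaust)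

lemma has_neighbour_Red_or_Blue:
  assumes "X \<noteq> {}"
  shows "has_neighbour c Red u X \<or> has_neighbour c Blue u X"
  using assms unfolding has_neighbour_def by (metis colour.exhaust equals0I)

lemma has_bad_configuration_iff:
  "has_bad_configuration c A u \<longleftrightarrow>
     (\<exists>i<5. has_neighbour c Red u (A i) \<and> has_neighbour c Red u (A ((i + 2) mod 5))
        \<and> has_neighbour c Red u (A ((i + 3) mod 5))) \<or>
     (\<exists>i<5. has_neighbour c Blue u (A i) \<and> has_neighbour c Blue u (A ((i + 1) mod 5))
        \<and> has_neighbour c Blue u (A ((i + 2) mod 5)))"
  unfolding has_bad_configuration_def has_neighbour_def by blast

theorem proposition7p10:
  fixes V :: "'a set" and c :: "'a \<Rightarrow> 'a \<Rightarrow> colour" and A :: "nat \<Rightarrow> 'a set" and u :: 'a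
  assumes "red_blue_colouring V c"
    and "u \<in> V"
    and "\<forall>i<5. A i \<subseteq> V - {u}"
    and "pentagon_blowup c A"
    and "\<not> has_bad_configuration c A u"
  shows "\<exists>i<5. pentagon_blowup c (A(i := A i \<union> {u}))"
proof -
  let ?red = "\<lambda>j. has_neighbour c Red u (A j)" and ?blue = "\<lambda>j. has_neighbour c Blue u (A j)"
  have "\<forall>j<5. A j \<noteq> {}"
    using assms(4) by (simp add: pentagon_blowup_def)
  then have cover: "\<forall>j<5. ?red j \<or> ?blue j"
    by (simp add: has_neighbour_Red_or_Blue)
  have no_red_bad: "\<forall>i<5. \<not> (?red i \<and> ?red ((i + 2) mod 5) \<and> ?red ((i + 3) mod 5))"
    and no_blue_bad: "\<forall>i<5. \<not> (?blue i \<and> ?blue ((i + 1) mod 5) \<and> ?blue ((i + 2) mod 5))"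
    using assms(5) unfolding has_bad_configuration_iff by blast+
  obtain i where i: "i < 5"
    and no_blue: "\<not> ?blue ((i + 1) mod 5)" "\<not> ?blue ((i + 4) mod 5)"
    and no_red: "\<not> ?red ((i + 2) mod 5)" "\<not> ?red ((i + 3) mod 5)"
    using pentagon_pattern[of ?red ?blue, OF cover no_red_bad no_blue_bad] by blast
  have sym: "\<forall>j<5. \<forall>x\<in>A j. c x u = c u x"
    using assms(1-3) unfolding red_blue_colouring_def by blast
  have fresh: "\<forall>j<5. u \<notin> A j"
    using assms(3) by blast
  show ?thesis
    using pentagon_blowup_insert[OF assms(4) i fresh sym
        no_blue[THEN not_has_neighbour_Blue] no_red[THEN not_has_neighbour_Red]] i by blast
qed

end
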